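(* For every history formula $\varphi$ of CTL*KΔ, every model $M$, every history $h$ of $M$ and every observation record $r$ that stops at $h$: $$h,r\models\varphi\quad\text{iff}\quad \mathit{last}(h),\ \mathit{IS}(h,r),\ o(h,r)\models_I\varphi.$$
   Context: Fix a countably infinite set $\mathit{AP}$ of atomic propositions and a finite nonempty set $\mathit{Obs}$ of observations. For a word $w$ we write $w_i$ for its letter at position $i$ (positions start at $0$), $w_{\le i}$ for its prefix ending at position $i$, $w_{\ge i}$ for its suffix starting at position $i$, $|w|$ for the length of a finite word, and $\mathit{last}(w)$ for the last letter of a finite word; $w\preceq w'$ means $w$ is a prefix of $w'$. Syntax of CTL*KΔ (single agent): history formulas $\varphi::=p\mid\neg\varphi\mid\varphi\wedge\varphi\mid\mathbf A\psi\mid\mathbf K\varphi\mid\Delta^{o}\varphi$ and path formulas $\psi::=\varphi\mid\neg\psi\mid\psi\wedge\psi\mid\mathbf X\psi\mid\psi\,\mathbf U\,\psi$, with $p\in\mathit{AP}$ and $o\in\mathit{Obs}$; the formulas of the logic are the history formulas. A model is $M=(\mathit{AP}_f,S,T,V,\{\sim_o\}_{o\in\mathit{Obs}},s_\iota,o_\iota)$ where $\mathit{AP}_f\subseteq\mathit{AP}$ is finite, $S$ is a finite set of states, $T\subseteq S\times S$ is left-total, $V:S\to 2^{\mathit{AP}_f}$, each $\sim_o$ is an equivalence relation on $S$, $s_\iota\in S$ and $o_\iota\in\mathit{Obs}$. A path is an infinite sequence $\pi=s_0s_1\dots$ of states with $s_i\,T\,s_{i+1}$ for all $i$ (starting at any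 state); a history is a finite nonempty prefix of a path. An observation record is a finite word over $\mathit{Obs}\times\mathbb N$; $\epsilon$ is the empty record, $r\cdot(o,n)$ is $r$ with $(o,n)$ appended, and $r_{=n}$ is the subword of $r$ consisting of the pairs whose second component is $n$. The record $r$ stops at $n$ if $r_{=m}$ is empty for all $m>n$, and stops at a history $h$ if it stops at $|h|-1$. The list $\mathit{ol}(r,n)$ is defined by $\mathit{ol}(r,0)=o_\iota\cdot o_1\cdots o_k$ if $r_{=0}=(o_1,0)\cdots(o_k,0)$, and $\mathit{ol}(r,n+1)=\mathit{last}(\mathit{ol}(r,n))\cdot o_1\cdots o_k$ if $r_{=n+1}=(o_1,n+1)\cdots(o_k,n+1)$. Two histories are equivalent, $h\approx_r h'$, if $|h|=|h'|$ and for every $i<|h|$ and every $o$ occurring in $\mathit{ol}(r,i)$, $h_i\sim_o h'_i$. Natural semantics: for a history $h$ and record $r$: $h,r\models p$ iff $p\in V(\mathit{last}(h))$; $h,r\models\neg\varphi$ iff not $h,r\models\varphi$; $h,r\models\varphi_1\wedge\varphi_2$ iff both hold; $h,r\models\mathbf A\psi$ iff for all paths $\pi$ with $h\preceq\pi$, $\pi,|h|-1,r\models\psi$; $h,r\models\mathbf K\varphi$ iff $h',r\models\varphi$ for all histories $h'$ with $h'\approx_r h$; $h,r\models\Delta^o\varphi$ iff $h,r\cdot(o,|h|-1)\models\varphi$. For a path $\pi$, $n\in\mathbb N$ and record $r$: $\pi,n,r\models\varphi$ iff $\pi_{\le n},r\models\varphi$; negation and conjunction as usual; $\pi,n,r\models\mathbf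 X\psi$ iff $\pi,n+1,r\models\psi$; $\pi,n,r\models\psi_1\mathbf U\psi_2$ iff there is $m\ge n$ with $\pi,m,r\models\psi_2$ and $\pi,k,r\models\psi_1$ for all $n\le k<m$. For $I\subseteq S$, $T(I)=\{s'\mid\exists s\in I,\ s\,T\,s'\}$; $[s]_o=\{s'\mid s\sim_o s'\}$. The information set is $\mathit{IS}(h,r)=\{\mathit{last}(h')\mid h'\text{ a history with }h'\approx_r h\}$. Updates: $U_T(I,s',o)=T(I)\cap[s']_o$ and $U_\Delta(I,s,o')=I\cap[s]_{o'}$. $o(h,r)$ denotes the last element of $\mathit{ol}(r,|h|-1)$. Alternative semantics, for $s\in S$, $I\subseteq S$, $o\in\mathit{Obs}$: $s,I,o\models_I p$ iff $p\in V(s)$; negation and conjunction as usual; $s,I,o\models_I\mathbf A\psi$ iff for every path $\pi$ with $\pi_0=s$, $\pi,I,o\models_I\psi$; $s,I,o\models_I\mathbf K\varphi$ iff $s',I,o\models_I\varphi$ for all $s'\in I$; $s,I,o\models_I\Delta^{o'}\varphi$ iff $s,U_\Delta(I,s,o'),o'\models_I\varphi$. For a path $\pi$: $\pi,I,o\models_I\varphi$ iff $\pi_0,I,o\models_I\varphi$; negation and conjunction as usual; $\pi,I,o\models_I\mathbf X\psi$ iff $\pi_{\ge1},U_T(I,\pi_1,o),o\models_I\psi$; $\pi,I,o\models_I\psi_1\mathbf U\psi_2$ iff there is $n\ge0$ with $\pi_{\ge n},U_T^n(I,\pi,o),o\models_I\psi_2$ and $\pi_{\ge m},U_T^m(I,\pi,o),o\models_I\psi_1$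 for all $0\le m<n$, where $U_T^0(I,\pi,o)=I$ and $U_T^{n+1}(I,\pi,o)=U_T(U_T^n(I,\pi,o),\pi_{n+1},o)$. *)

theory Defs
  imports Main
begin

datatype 'o hform =
    Prop nat
  | HNot "'o hform"
  | HAnd "'o hform" "'o hform"
  | Aq "'o pform"
  | Kn "'o hform"
  | Delta 'o "'o hform"
and 'o pform =
    Hist "'o hform"
  | PNot "'o pform"
  | PAnd "'o pform" "'o pform"
  | Nx "'o pform"
  | Until "'o pform" "'o pform"

record ('s, 'o) model =
  APf :: "nat set"
  St :: "'s set"
  Tr :: "('s \<times> 's) set"
  Val :: "'s \<Rightarrow> nat set"
  Sim :: "'o \<Rightarrow> ('s \<times> 's) set"
  sinit :: 's
  oinit :: 'o

definition wf_model :: "('s, 'o::finite) model \<Rightarrow> bool" where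
  "wf_model M \<longleftrightarrow>
     finite (APf M) \<and> finite (St M) \<and>
     Tr M \<subseteq> St M \<times> St M \<and> (\<forall>s\<in>St M. \<exists>s'. (s, s') \<in> Tr M) \<and>
     (\<forall>s\<in>St M. Val M s \<subseteq> APf M) \<and>
     (\<forall>ob. equiv (St M) (Sim M ob)) \<and>
     sinit M \<in> St M"

definition is_path :: "('s, 'o) model \<Rightarrow> (nat \<Rightarrow> 's) \<Rightarrow> bool" where
  "is_path M \<pi> \<longleftrightarrow> (\<forall>i. \<pi> i \<in> St M \<and> (\<pi> i, \<pi> (Suc i)) \<in> Tr M)"

definition is_history :: "('s, 'o) model \<Rightarrow> 's list \<Rightarrow> bool" where
  "is_history M h \<longleftrightarrow> (\<exists>\<pi>. is_path M \<pi> \<and> h \<noteq> [] \<and> (\<forall>i<length h. h ! i = \<pi> i))"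

definition hprefix :: "'s list \<Rightarrow> (nat \<Rightarrow> 's) \<Rightarrow> bool" where
  "hprefix h \<pi> \<longleftrightarrow> (\<forall>i<length h. \<pi> i = h ! i)"

definition path_upto :: "(nat \<Rightarrow> 's) \<Rightarrow> nat \<Rightarrow> 's list" where
  "path_upto \<pi> n = map \<pi> [0..<Suc n]"

type_synonym 'o obs_record = "('o \<times> nat) list"

definition rec_at :: "'o obs_record \<Rightarrow> nat \<Rightarrow> 'o obs_record" where
  "rec_at r n = filter (\<lambda>p. snd p = n) r"

definition stops_at :: "'o obs_record \<Rightarrow> nat \<Rightarrow> bool" where
  "stops_at r n \<longleftrightarrow> (\<forall>m>n. rec_at r m = [])"

definition stops_at_hist :: "'o obs_record \<Rightarrow> 's list \<Rightarrow> bool" where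
  "stops_at_hist r h \<longleftrightarrow> stops_at r (length h - 1)"

fun ol :: "('s, 'o) model \<Rightarrow> 'o obs_record \<Rightarrow> nat \<Rightarrow> 'o list" where
  "ol M r 0 = oinit M # map fst (rec_at r 0)"
| "ol M r (Suc n) = last (ol M r n) # map fst (rec_at r (Suc n))"

definition hequiv :: "('s, 'o) model \<Rightarrow> 'o obs_record \<Rightarrow> 's list \<Rightarrow> 's list \<Rightarrow> bool" where
  "hequiv M r h h' \<longleftrightarrow> length h = length h' \<and>
     (\<forall>i<length h. \<forall>ob\<in>set (ol M r i). (h ! i, h' ! i) \<in> Sim M ob)"

fun hsat :: "('s, 'o) model \<Rightarrow> 's list \<Rightarrow> 'o obs_record \<Rightarrow> 'o hform \<Rightarrow> bool"
and psat :: "('s, 'o) model \<Rightarrow> (nat \<Rightarrow> 's) \<Rightarrow> nat \<Rightarrow> 'o obs_record \<Rightarrow> 'o pform \<Rightarrow> bool" where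
  "hsat M h r (Prop p) = (p \<in> Val M (last h))"
| "hsat M h r (HNot \<phi>) = (\<not> hsat M h r \<phi>)"
| "hsat M h r (HAnd \<phi>1 \<phi>2) = (hsat M h r \<phi>1 \<and> hsat M h r \<phi>2)"
| "hsat M h r (Aq \<psi>) = (\<forall>\<pi>. is_path M \<pi> \<and> hprefix h \<pi> \<longrightarrow> psat M \<pi> (length h - 1) r \<psi>)"
| "hsat M h r (Kn \<phi>) = (\<forall>h'. is_history M h' \<and> hequiv M r h' h \<longrightarrow> hsat M h' r \<phi>)"
| "hsat M h r (Delta ob \<phi>) = hsat M h (r @ [(ob, length h - 1)]) \<phi>"
| "psat M \<pi> n r (Hist \<phi>) = hsat M (path_upto \<pi> n) r \<phi>"
| "psat M \<pi> n r (PNot \<psi>) = (\<not> psat M \<pi> n r \<psi>)"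
| "psat M \<pi> n r (PAnd \<psi>1 \<psi>2) = (psat M \<pi> n r \<psi>1 \<and> psat M \<pi> n r \<psi>2)"
| "psat M \<pi> n r (Nx \<psi>) = psat M \<pi> (Suc n) r \<psi>"
| "psat M \<pi> n r (Until \<psi>1 \<psi>2) =
     (\<exists>m\<ge>n. psat M \<pi> m r \<psi>2 \<and> (\<forall>k. n \<le> k \<and> k < m \<longrightarrow> psat M \<pi> k r \<psi>1))"

definition Timg :: "('s, 'o) model \<Rightarrow> 's set \<Rightarrow> 's set" where
  "Timg M I = {s'. \<exists>s\<in>I. (s, s') \<in> Tr M}"

definition cls :: "('s, 'o) model \<Rightarrow> 's \<Rightarrow> 'o \<Rightarrow> 's set" where
  "cls M s ob = {s'. (s, s') \<in> Sim M ob}"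

definition UT :: "('s, 'o) model \<Rightarrow> 's set \<Rightarrow> 's \<Rightarrow> 'o \<Rightarrow> 's set" where
  "UT M I s' ob = Timg M I \<inter> cls M s' ob"

definition UD :: "('s, 'o) model \<Rightarrow> 's set \<Rightarrow> 's \<Rightarrow> 'o \<Rightarrow> 's set" where
  "UD M I s ob' = I \<inter> cls M s ob'"

fun UTn :: "('s, 'o) model \<Rightarrow> nat \<Rightarrow> 's set \<Rightarrow> (nat \<Rightarrow> 's) \<Rightarrow> 'o \<Rightarrow> 's set" where
  "UTn M 0 I \<pi> ob = I"
| "UTn M (Suc n) I \<pi> ob = UT M (UTn M n I \<pi> ob) (\<pi> (Suc n)) ob"

definition suffix_from :: "(nat \<Rightarrow> 's) \<Rightarrow> nat \<Rightarrow> (nat \<Rightarrow> 's)" where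
  "suffix_from \<pi> n = (\<lambda>i. \<pi> (i + n))"

fun isat :: "('s, 'o) model \<Rightarrow> 's \<Rightarrow> 's set \<Rightarrow> 'o \<Rightarrow> 'o hform \<Rightarrow> bool"
and ipsat :: "('s, 'o) model \<Rightarrow> (nat \<Rightarrow> 's) \<Rightarrow> 's set \<Rightarrow> 'o \<Rightarrow> 'o pform \<Rightarrow> bool" where
  "isat M s I ob (Prop p) = (p \<in> Val M s)"
| "isat M s I ob (HNot \<phi>) = (\<not> isat M s I ob \<phi>)"
| "isat M s I ob (HAnd \<phi>1 \<phi>2) = (isat M s I ob \<phi>1 \<and> isat M s I ob \<phi>2)"
| "isat M s I ob (Aq \<psi>) = (\<forall>\<pi>. is_path M \<pi> \<and> \<pi> 0 = s \<longrightarrow> ipsat M \<pi> I ob \<psi>)"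
| "isat M s I ob (Kn \<phi>) = (\<forall>s'\<in>I. isat M s' I ob \<phi>)"
| "isat M s I ob (Delta ob' \<phi>) = isat M s (UD M I s ob') ob' \<phi>"
| "ipsat M \<pi> I ob (Hist \<phi>) = isat M (\<pi> 0) I ob \<phi>"
| "ipsat M \<pi> I ob (PNot \<psi>) = (\<not> ipsat M \<pi> I ob \<psi>)"
| "ipsat M \<pi> I ob (PAnd \<psi>1 \<psi>2) = (ipsat M \<pi> I ob \<psi>1 \<and> ipsat M \<pi> I ob \<psi>2)"
| "ipsat M \<pi> I ob (Nx \<psi>) = ipsat M (suffix_from \<pi> 1) (UT M I (\<pi> 1) ob) ob \<psi>"
| "ipsat M \<pi> I ob (Until \<psi>1 \<psi>2) =
     (\<exists>n. ipsat M (suffix_from \<pi> n) (UTn M n I \<pi> ob) ob \<psi>2 \<and>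
        (\<forall>m<n. ipsat M (suffix_from \<pi> m) (UTn M m I \<pi> ob) ob \<psi>1))"

definition IS :: "('s, 'o) model \<Rightarrow> 's list \<Rightarrow> 'o obs_record \<Rightarrow> 's set" where
  "IS M h r = {last h' | h'. is_history M h' \<and> hequiv M r h' h}"

definition obs_of :: "('s, 'o) model \<Rightarrow> 's list \<Rightarrow> 'o obs_record \<Rightarrow> 'o" where
  "obs_of M h r = last (ol M r (length h - 1))"

end

theory Submission
  imports Defs
begin

text \<open>
  The information set of a history evolves exactly as the updates of the alternative
  semantics prescribe: a \<open>\<Delta>\<^sup>o\<close> step adds \<open>o\<close> to the observations at the last
  position, so it intersects the information set with \<open>[last h]\<^sub>o\<close>; and since the record
  stops at \<open>h\<close>, extending \<open>h\<close> by a state \<open>s\<close> uses only the current observation \<open>o(h,r)\<close>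
  at the new position, so the information set becomes \<open>T(I) \<inter> [s]\<^bsub>o(h,r)\<^esub>\<close>.
  Histories equivalent to \<open>h\<close> have the same information set and current observation,
  which handles \<open>K\<close>; paths extending \<open>h\<close> correspond to paths starting at \<open>last h\<close>,
  which handles \<open>A\<close>. The theorem follows by simultaneous induction on history and
  path formulas, the latter evaluated at a position \<open>n\<close> of a path at which the record stops.
\<close>

subsection \<open>Paths and histories\<close>

lemma wf_model_Sim_sym: "wf_model M \<Longrightarrow> (a, b) \<in> Sim M ob \<Longrightarrow> (b, a) \<in> Sim M ob"
  unfolding wf_model_def equiv_def by (meson symD)

lemma wf_model_Sim_trans:
  "wf_model M \<Longrightarrow> (a, b) \<in> Sim M ob \<Longrightarrow> (b, c) \<in> Sim M ob \<Longrightarrow> (a, c) \<in> Sim M ob"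
  unfolding wf_model_def equiv_def by (meson transD)

lemma wf_model_Tr_St: "wf_model M \<Longrightarrow> (a, b) \<in> Tr M \<Longrightarrow> b \<in> St M"
  unfolding wf_model_def by blast

lemma wf_model_path_from:
  assumes wf: "wf_model M" and s: "s \<in> St M"
  obtains \<pi> where "is_path M \<pi>" "\<pi> 0 = s"
proof -
  define succ where "succ = (\<lambda>t. SOME t'. (t, t') \<in> Tr M)"
  have succ: "(t, succ t) \<in> Tr M \<and> succ t \<in> St M" if "t \<in> St M" for t
  proof -
    have "\<exists>t'. (t, t') \<in> Tr M" using wf that unfolding wf_model_def by blast
    then have "(t, succ t) \<in> Tr M" unfolding succ_def by (rule someI_ex)
    then show ?thesis using wf_model_Tr_St[OF wf] by blast
  qed
  have St: "(succ ^^ i) s \<in> St M" for i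
    by (induction i) (auto simp: s succ)
  have "is_path M (\<lambda>i. (succ ^^ i) s)"
    unfolding is_path_def using St succ by auto
  then show thesis using that by simp
qed

lemma is_path_suffix_from: "is_path M \<pi> \<Longrightarrow> is_path M (suffix_from \<pi> n)"
  unfolding is_path_def suffix_from_def by simp

lemma suffix_from_suffix_from: "suffix_from (suffix_from \<pi> n) m = suffix_from \<pi> (n + m)"
  by (simp add: suffix_from_def add.commute add.left_commute)

lemma is_path_case_nat:
  "is_path M \<pi> \<Longrightarrow> s \<in> St M \<Longrightarrow> (s, \<pi> 0) \<in> Tr M \<Longrightarrow> is_path M (case_nat s \<pi>)"
  unfolding is_path_def by (simp split: nat.split)

definition path_splice :: "(nat \<Rightarrow> 's) \<Rightarrow> nat \<Rightarrow> (nat \<Rightarrow> 's) \<Rightarrow> nat \<Rightarrow> 's" where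
  "path_splice \<pi> n \<pi>' i = (if i \<le> n then \<pi> i else \<pi>' (i - n))"

lemma is_path_path_splice:
  assumes "is_path M \<pi>" "is_path M \<pi>'" "\<pi>' 0 = \<pi> n"
  shows "is_path M (path_splice \<pi> n \<pi>')"
  unfolding is_path_def
proof (intro allI conjI)
  fix i
  show "path_splice \<pi> n \<pi>' i \<in> St M"
    using assms unfolding is_path_def path_splice_def by simp
  show "(path_splice \<pi> n \<pi>' i, path_splice \<pi> n \<pi>' (Suc i)) \<in> Tr M"
  proof (cases i n rule: linorder_cases)
    case less
    then show ?thesis using assms(1) by (simp add: is_path_def path_splice_def)
  next
    case equal
    have "(\<pi>' 0, \<pi>' (Suc 0)) \<in> Tr M" using assms(2) unfolding is_path_def by blast
    then show ?thesis using equal assms(3) by (simp add: path_splice_def)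
  next
    case greater
    then have "Suc i - n = Suc (i - n)" by simp
    then show ?thesis using greater assms(2) by (simp add: is_path_def path_splice_def)
  qed
qed

lemma suffix_from_path_splice: "\<pi>' 0 = \<pi> n \<Longrightarrow> suffix_from (path_splice \<pi> n \<pi>') n = \<pi>'"
  by (auto simp: suffix_from_def path_splice_def)

lemma is_history_ne: "is_history M h \<Longrightarrow> h \<noteq> []"
  unfolding is_history_def by blast

lemma is_history_iff_hprefix: "is_history M h \<longleftrightarrow> h \<noteq> [] \<and> (\<exists>\<pi>. is_path M \<pi> \<and> hprefix h \<pi>)"
  unfolding is_history_def hprefix_def by auto

lemma hprefix_last: "hprefix h \<pi> \<Longrightarrow> h \<noteq> [] \<Longrightarrow> \<pi> (length h - 1) = last h"
  by (simp add: hprefix_def last_conv_nth)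

lemma path_upto_Suc: "path_upto \<pi> (Suc n) = path_upto \<pi> n @ [\<pi> (Suc n)]"
  by (simp add: path_upto_def)

lemma length_path_upto [simp]: "length (path_upto \<pi> n) = Suc n"
  by (simp add: path_upto_def)

lemma last_path_upto [simp]: "last (path_upto \<pi> n) = \<pi> n"
  by (simp add: path_upto_def)

lemma is_history_path_upto: "is_path M \<pi> \<Longrightarrow> is_history M (path_upto \<pi> n)"
  unfolding is_history_def path_upto_def by (intro exI[of _ \<pi>]) (auto simp del: upt_Suc)

lemma path_upto_hprefix: "hprefix h \<pi> \<Longrightarrow> h \<noteq> [] \<Longrightarrow> path_upto \<pi> (length h - 1) = h"
  unfolding hprefix_def path_upto_def by (intro nth_equalityI) (auto simp del: upt_Suc)

lemma paths_through_history:
  assumes "is_history M h" "is_path M \<pi>'" "\<pi>' 0 = last h"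
  obtains \<pi> where "is_path M \<pi>" "hprefix h \<pi>" "suffix_from \<pi> (length h - 1) = \<pi>'"
proof -
  obtain \<pi> where \<pi>: "is_path M \<pi>" "hprefix h \<pi>" and ne: "h \<noteq> []"
    using assms(1) is_history_iff_hprefix by blast
  have "\<pi>' 0 = \<pi> (length h - 1)" using assms(3) hprefix_last[OF \<pi>(2) ne] by simp
  moreover have "hprefix h (path_splice \<pi> (length h - 1) \<pi>')"
    using \<pi>(2) by (auto simp: hprefix_def path_splice_def)
  ultimately show thesis
    using that \<pi>(1) assms(2) is_path_path_splice suffix_from_path_splice by metis
qed

lemma is_history_snoc:
  assumes wf: "wf_model M" and ne: "h \<noteq> []"
  shows "is_history M (h @ [x]) \<longleftrightarrow> is_history M h \<and> (last h, x) \<in> Tr M"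
proof
  assume "is_history M (h @ [x])"
  then obtain \<pi> where \<pi>: "is_path M \<pi>" "hprefix (h @ [x]) \<pi>"
    using is_history_iff_hprefix by blast
  then have "hprefix h \<pi>" "\<pi> (length h) = x"
    by (auto simp: hprefix_def nth_append)
  moreover have "Suc (length h - 1) = length h" using ne by simp
  then have "(\<pi> (length h - 1), \<pi> (length h)) \<in> Tr M"
    using \<pi>(1) unfolding is_path_def by metis
  ultimately show "is_history M h \<and> (last h, x) \<in> Tr M"
    using \<pi>(1) ne hprefix_last[of h \<pi>] is_history_iff_hprefix by auto
next
  assume a: "is_history M h \<and> (last h, x) \<in> Tr M"
  obtain \<pi>x where \<pi>x: "is_path M \<pi>x" "\<pi>x 0 = x"
    using wf_model_path_from[OF wf wf_model_Tr_St[OF wf]] a by blast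
  obtain \<pi> where \<pi>: "is_path M \<pi>" "hprefix h \<pi>"
    using a is_history_iff_hprefix by blast
  have "last h \<in> St M" using \<pi> ne hprefix_last unfolding is_path_def by metis
  then have "is_path M (case_nat (last h) \<pi>x)"
    using is_path_case_nat \<pi>x a by fastforce
  then obtain \<pi>' where \<pi>': "is_path M \<pi>'" "hprefix h \<pi>'"
      and suffix: "suffix_from \<pi>' (length h - 1) = case_nat (last h) \<pi>x"
    using paths_through_history a by (metis nat.case(1))
  have "\<pi>' (length h) = suffix_from \<pi>' (length h - 1) 1"
    using ne by (simp add: suffix_from_def)
  then have "\<pi>' (length h) = x" using suffix \<pi>x(2) by simp
  then have "hprefix (h @ [x]) \<pi>'"
    using \<pi>'(2) unfolding hprefix_def by (auto simp: nth_append less_Suc_eq)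
  then show "is_history M (h @ [x])"
    using \<pi>'(1) is_history_iff_hprefix by blast
qed

subsection \<open>Observation records\<close>

lemma rec_at_snoc: "rec_at (r @ [(ob, N)]) i = rec_at r i @ (if i = N then [(ob, N)] else [])"
  by (simp add: rec_at_def)

lemma ol_snoc_less: "i < N \<Longrightarrow> ol M (r @ [(ob, N)]) i = ol M r i"
  by (induction i) (auto simp: rec_at_snoc)

lemma ol_snoc_eq: "ol M (r @ [(ob, N)]) N = ol M r N @ [ob]"
  by (cases N) (auto simp: rec_at_snoc ol_snoc_less)

lemma stops_at_snoc: "stops_at r N \<Longrightarrow> stops_at (r @ [(ob, N)]) N"
  by (simp add: stops_at_def rec_at_snoc)

lemma stops_at_mono: "stops_at r n \<Longrightarrow> n \<le> m \<Longrightarrow> stops_at r m"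
  by (simp add: stops_at_def)

lemma ol_Suc_if_stops_at: "stops_at r n \<Longrightarrow> ol M r (Suc n) = [last (ol M r n)]"
  by (simp add: stops_at_def)

lemma obs_of_path_upto: "obs_of M (path_upto \<pi> n) r = last (ol M r n)"
  by (simp add: obs_of_def)

lemma obs_of_snoc_record: "obs_of M h (r @ [(ob, length h - 1)]) = ob"
  by (simp add: obs_of_def ol_snoc_eq)

subsection \<open>Equivalent histories and information sets\<close>

lemma hequiv_sym: "wf_model M \<Longrightarrow> hequiv M r h h' \<Longrightarrow> hequiv M r h' h"
  unfolding hequiv_def using wf_model_Sim_sym by metis

lemma hequiv_trans: "wf_model M \<Longrightarrow> hequiv M r h h' \<Longrightarrow> hequiv M r h' h'' \<Longrightarrow> hequiv M r h h''"
  unfolding hequiv_def using wf_model_Sim_trans by metis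

lemma IS_hequiv: "wf_model M \<Longrightarrow> hequiv M r h' h \<Longrightarrow> IS M h' r = IS M h r"
  unfolding IS_def using hequiv_sym hequiv_trans by metis

lemma obs_of_hequiv: "hequiv M r h' h \<Longrightarrow> obs_of M h' r = obs_of M h r"
  by (simp add: hequiv_def obs_of_def)

lemma hequiv_snoc_record:
  assumes ne: "h \<noteq> []"
  shows "hequiv M (r @ [(ob, length h - 1)]) h' h \<longleftrightarrow>
    hequiv M r h' h \<and> (last h', last h) \<in> Sim M ob"
proof -
  let ?N = "length h - 1"
  have ol: "set (ol M (r @ [(ob, ?N)]) i) = set (ol M r i) \<union> (if i = ?N then {ob} else {})"
    if "i < length h" for i
    using that by (auto simp: ol_snoc_less ol_snoc_eq)
  have all: "(\<forall>i<length h. \<forall>ob'\<in>set (ol M (r @ [(ob, ?N)]) i). P i ob') \<longleftrightarrow>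
      (\<forall>i<length h. \<forall>ob'\<in>set (ol M r i). P i ob') \<and> P ?N ob" for P
    using ol ne by auto
  have "length h' = length h \<Longrightarrow> last h' = h' ! ?N \<and> last h = h ! ?N"
    using ne by (metis last_conv_nth length_0_conv)
  then show ?thesis
    unfolding hequiv_def using all[of "\<lambda>i ob'. (h' ! i, h ! i) \<in> Sim M ob'"]
    by (cases "length h' = length h") auto
qed

lemma IS_snoc_record:
  assumes wf: "wf_model M" and ne: "h \<noteq> []"
  shows "IS M h (r @ [(ob, length h - 1)]) = UD M (IS M h r) (last h) ob"
proof -
  have "(last h', last h) \<in> Sim M ob \<longleftrightarrow> last h' \<in> cls M (last h) ob" for h'
    unfolding cls_def using wf_model_Sim_sym[OF wf] by blast
  then have "IS M h (r @ [(ob, length h - 1)]) =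
      {last h' | h'. is_history M h' \<and> hequiv M r h' h \<and> last h' \<in> cls M (last h) ob}"
    unfolding IS_def hequiv_snoc_record[OF ne] by simp
  also have "\<dots> = IS M h r \<inter> cls M (last h) ob"
    unfolding IS_def by blast
  finally show ?thesis
    unfolding UD_def .
qed

lemma hequiv_snoc_history:
  assumes "length h = Suc n" "stops_at r n"
  shows "hequiv M r h'' (h @ [s]) \<longleftrightarrow>
    (\<exists>h' x. h'' = h' @ [x] \<and> hequiv M r h' h \<and> (x, s) \<in> Sim M (last (ol M r n)))"
proof -
  have snoc: "hequiv M r (h' @ [x]) (h @ [s]) \<longleftrightarrow>
      hequiv M r h' h \<and> (x, s) \<in> Sim M (last (ol M r n))" if "length h' = Suc n" for h' x
  proof -
    define P where "P i = (\<forall>ob\<in>set (ol M r i). ((h' @ [x]) ! i, (h @ [s]) ! i) \<in> Sim M ob)" for i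
    have "(\<forall>i<Suc (Suc n). P i) \<longleftrightarrow> P (Suc n) \<and> (\<forall>i<Suc n. P i)"
      by (rule All_less_Suc)
    moreover have "P (Suc n) \<longleftrightarrow> (x, s) \<in> Sim M (last (ol M r n))"
      unfolding P_def ol_Suc_if_stops_at[OF assms(2)] using that assms(1) by (simp add: nth_append)
    moreover have "(\<forall>i<Suc n. P i) \<longleftrightarrow> (\<forall>i<Suc n. \<forall>ob\<in>set (ol M r i). (h' ! i, h ! i) \<in> Sim M ob)"
      unfolding P_def using that assms(1) by (simp add: nth_append)
    ultimately show ?thesis using that assms(1) unfolding hequiv_def P_def by auto
  qed
  show ?thesis
  proof
    assume H: "hequiv M r h'' (h @ [s])"
    then have "length h'' = Suc (Suc n)" using assms by (simp add: hequiv_def)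
    then obtain h' x where "h'' = h' @ [x]" "length h' = Suc n"
      by (cases h'' rule: rev_cases) auto
    then show "\<exists>h' x. h'' = h' @ [x] \<and> hequiv M r h' h \<and> (x, s) \<in> Sim M (last (ol M r n))"
      using H snoc by blast
  next
    assume "\<exists>h' x. h'' = h' @ [x] \<and> hequiv M r h' h \<and> (x, s) \<in> Sim M (last (ol M r n))"
    then obtain h' x where "h'' = h' @ [x]" "hequiv M r h' h" "(x, s) \<in> Sim M (last (ol M r n))"
      by blast
    moreover have "length h' = Suc n" using \<open>hequiv M r h' h\<close> assms(1) by (simp add: hequiv_def)
    ultimately show "hequiv M r h'' (h @ [s])" using snoc by blast
  qed
qed

lemma IS_snoc_history:
  assumes wf: "wf_model M" and len: "length h = Suc n" and stops: "stops_at r n"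
  shows "IS M (h @ [s]) r = UT M (IS M h r) s (last (ol M r n))"
proof (intro set_eqI)
  fix x
  let ?ob = "last (ol M r n)"
  have ne: "hequiv M r h' h \<Longrightarrow> h' \<noteq> []" for h'
    using len by (auto simp: hequiv_def)
  have "x \<in> IS M (h @ [s]) r \<longleftrightarrow>
      (\<exists>h'. is_history M (h' @ [x]) \<and> hequiv M r h' h \<and> (x, s) \<in> Sim M ?ob)"
    unfolding IS_def hequiv_snoc_history[OF len stops] by (auto, metis last_snoc)
  also have "\<dots> \<longleftrightarrow>
      (\<exists>h'. is_history M h' \<and> (last h', x) \<in> Tr M \<and> hequiv M r h' h \<and> (x, s) \<in> Sim M ?ob)"
    using is_history_snoc[OF wf ne] by blast
  also have "\<dots> \<longleftrightarrow> x \<in> UT M (IS M h r) s ?ob"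
    unfolding UT_def Timg_def cls_def IS_def using wf_model_Sim_sym[OF wf] by blast
  finally show "x \<in> IS M (h @ [s]) r \<longleftrightarrow> x \<in> UT M (IS M h r) s ?ob" .
qed

lemma last_ol_if_stops_at:
  assumes "stops_at r n" "n \<le> m"
  shows "last (ol M r m) = last (ol M r n)"
  using assms(2)
proof (induction m rule: dec_induct)
  case (step m)
  then show ?case using ol_Suc_if_stops_at[OF stops_at_mono[OF assms(1)]] by simp
qed simp

lemma UTn_IS_path_upto:
  assumes wf: "wf_model M" and stops: "stops_at r n"
  shows "UTn M k (IS M (path_upto \<pi> n) r) (suffix_from \<pi> n) (last (ol M r n)) =
    IS M (path_upto \<pi> (n + k)) r"
proof (induction k)
  case (Suc k)
  have "IS M (path_upto \<pi> (n + Suc k)) r =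
      UT M (IS M (path_upto \<pi> (n + k)) r) (\<pi> (n + Suc k)) (last (ol M r (n + k)))"
    unfolding add_Suc_right path_upto_Suc
    using IS_snoc_history[OF wf _ stops_at_mono[OF stops]] by simp
  moreover have "suffix_from \<pi> n (Suc k) = \<pi> (n + Suc k)"
    by (simp add: suffix_from_def add.commute)
  ultimately show ?case
    using Suc last_ol_if_stops_at[OF stops, of "n + k" M] by simp
qed simp

subsection \<open>Agreement of the two semantics\<close>

definition hsat_agrees :: "('s, 'o) model \<Rightarrow> 'o hform \<Rightarrow> bool" where
  "hsat_agrees M \<phi> \<longleftrightarrow> (\<forall>h r. is_history M h \<longrightarrow> stops_at_hist r h \<longrightarrow>
     (hsat M h r \<phi> \<longleftrightarrow> isat M (last h) (IS M h r) (obs_of M h r) \<phi>))"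

definition psat_agrees :: "('s, 'o) model \<Rightarrow> 'o pform \<Rightarrow> bool" where
  "psat_agrees M \<psi> \<longleftrightarrow> (\<forall>\<pi> n r. is_path M \<pi> \<longrightarrow> stops_at r n \<longrightarrow>
     (psat M \<pi> n r \<psi> \<longleftrightarrow>
      ipsat M (suffix_from \<pi> n) (IS M (path_upto \<pi> n) r) (last (ol M r n)) \<psi>))"

lemma hsat_agrees_Aq:
  fixes M :: "('s, 'o) model"
  assumes "psat_agrees M \<psi>"
  shows "hsat_agrees M (Aq \<psi>)"
  unfolding hsat_agrees_def
proof (intro allI impI)
  fix h and r :: "'o obs_record"
  assume h: "is_history M h" and "stops_at_hist r h"
  let ?N = "length h - 1"
  have ne: "h \<noteq> []" using is_history_ne[OF h] .
  have stops: "stops_at r ?N" using \<open>stops_at_hist r h\<close> by (simp add: stops_at_hist_def)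
  let ?sat = "\<lambda>\<pi>'. ipsat M \<pi>' (IS M h r) (obs_of M h r) \<psi>"
  have "hsat M h r (Aq \<psi>) \<longleftrightarrow> (\<forall>\<pi>. is_path M \<pi> \<and> hprefix h \<pi> \<longrightarrow> ?sat (suffix_from \<pi> ?N))"
    using assms stops path_upto_hprefix[OF _ ne]
    by (auto simp: psat_agrees_def obs_of_def)
  also have "\<dots> \<longleftrightarrow> (\<forall>\<pi>'. is_path M \<pi>' \<and> \<pi>' 0 = last h \<longrightarrow> ?sat \<pi>')"
  proof
    assume all: "\<forall>\<pi>. is_path M \<pi> \<and> hprefix h \<pi> \<longrightarrow> ?sat (suffix_from \<pi> ?N)"
    show "\<forall>\<pi>'. is_path M \<pi>' \<and> \<pi>' 0 = last h \<longrightarrow> ?sat \<pi>'"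
      using paths_through_history[OF h] all by metis
  next
    assume all: "\<forall>\<pi>'. is_path M \<pi>' \<and> \<pi>' 0 = last h \<longrightarrow> ?sat \<pi>'"
    show "\<forall>\<pi>. is_path M \<pi> \<and> hprefix h \<pi> \<longrightarrow> ?sat (suffix_from \<pi> ?N)"
    proof (intro allI impI)
      fix \<pi> assume "is_path M \<pi> \<and> hprefix h \<pi>"
      then have "is_path M (suffix_from \<pi> ?N)" "suffix_from \<pi> ?N 0 = last h"
        using is_path_suffix_from hprefix_last[OF _ ne] by (auto simp: suffix_from_def)
      then show "?sat (suffix_from \<pi> ?N)" using all by blast
    qed
  qed
  finally show "hsat M h r (Aq \<psi>) \<longleftrightarrow> isat M (last h) (IS M h r) (obs_of M h r) (Aq \<psi>)"
    by simp
qed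

lemma hsat_agrees_Kn:
  fixes M :: "('s, 'o::finite) model"
  assumes wf: "wf_model M" and "hsat_agrees M \<phi>"
  shows "hsat_agrees M (Kn \<phi>)"
  unfolding hsat_agrees_def
proof (intro allI impI)
  fix h and r :: "'o obs_record"
  assume "is_history M h" "stops_at_hist r h"
  have "hsat M h' r \<phi> \<longleftrightarrow> isat M (last h') (IS M h r) (obs_of M h r) \<phi>"
    if "is_history M h'" "hequiv M r h' h" for h'
  proof -
    have "stops_at_hist r h'"
      using \<open>stops_at_hist r h\<close> that(2) by (simp add: stops_at_hist_def hequiv_def)
    then show ?thesis
      using assms(2) that IS_hequiv[OF wf that(2)] obs_of_hequiv[OF that(2)]
      by (simp add: hsat_agrees_def)
  qed
  then show "hsat M h r (Kn \<phi>) \<longleftrightarrow> isat M (last h) (IS M h r) (obs_of M h r) (Kn \<phi>)"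
    unfolding IS_def[of M h r] by auto
qed

lemma hsat_agrees_Delta:
  fixes M :: "('s, 'o::finite) model"
  assumes wf: "wf_model M" and "hsat_agrees M \<phi>"
  shows "hsat_agrees M (Delta ob \<phi>)"
  unfolding hsat_agrees_def
proof (intro allI impI)
  fix h and r :: "'o obs_record"
  assume h: "is_history M h" and "stops_at_hist r h"
  let ?r = "r @ [(ob, length h - 1)]"
  have "stops_at_hist ?r h"
    using \<open>stops_at_hist r h\<close> stops_at_snoc by (simp add: stops_at_hist_def)
  then have "hsat M h ?r \<phi> \<longleftrightarrow> isat M (last h) (IS M h ?r) (obs_of M h ?r) \<phi>"
    using assms(2) h by (simp add: hsat_agrees_def)
  moreover have "IS M h ?r = UD M (IS M h r) (last h) ob"
    using IS_snoc_record[OF wf is_history_ne[OF h]] .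
  moreover have "obs_of M h ?r = ob"
    by (rule obs_of_snoc_record)
  ultimately show "hsat M h r (Delta ob \<phi>) \<longleftrightarrow> isat M (last h) (IS M h r) (obs_of M h r) (Delta ob \<phi>)"
    by (simp only: hsat.simps isat.simps)
qed

lemma psat_agrees_Hist: "hsat_agrees M \<phi> \<Longrightarrow> psat_agrees M (Hist \<phi>)"
  unfolding hsat_agrees_def psat_agrees_def
  by (simp add: is_history_path_upto stops_at_hist_def obs_of_path_upto suffix_from_def)

lemma psat_agrees_Nx:
  fixes M :: "('s, 'o::finite) model"
  assumes wf: "wf_model M" and "psat_agrees M \<psi>"
  shows "psat_agrees M (Nx \<psi>)"
  unfolding psat_agrees_def
proof (intro allI impI)
  fix \<pi> n and r :: "'o obs_record"
  assume "is_path M \<pi>" "stops_at r n"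
  have "psat M \<pi> (Suc n) r \<psi> \<longleftrightarrow>
      ipsat M (suffix_from \<pi> (Suc n)) (IS M (path_upto \<pi> (Suc n)) r) (last (ol M r (Suc n))) \<psi>"
    using assms(2) \<open>is_path M \<pi>\<close> stops_at_mono[OF \<open>stops_at r n\<close>] by (simp add: psat_agrees_def)
  moreover have "IS M (path_upto \<pi> (Suc n)) r =
      UT M (IS M (path_upto \<pi> n) r) (suffix_from \<pi> n 1) (last (ol M r n))"
    unfolding path_upto_Suc using IS_snoc_history[OF wf _ \<open>stops_at r n\<close>]
    by (simp add: suffix_from_def)
  ultimately show "psat M \<pi> n r (Nx \<psi>) \<longleftrightarrow>
      ipsat M (suffix_from \<pi> n) (IS M (path_upto \<pi> n) r) (last (ol M r n)) (Nx \<psi>)"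
    using ol_Suc_if_stops_at[OF \<open>stops_at r n\<close>] by (simp add: suffix_from_suffix_from)
qed

lemma psat_Until_offset:
  "psat M \<pi> n r (Until \<psi>1 \<psi>2) \<longleftrightarrow>
    (\<exists>j. psat M \<pi> (n + j) r \<psi>2 \<and> (\<forall>i<j. psat M \<pi> (n + i) r \<psi>1))"
proof
  assume "psat M \<pi> n r (Until \<psi>1 \<psi>2)"
  then obtain m where "n \<le> m" "psat M \<pi> m r \<psi>2" "\<forall>k. n \<le> k \<and> k < m \<longrightarrow> psat M \<pi> k r \<psi>1"
    by auto
  then show "\<exists>j. psat M \<pi> (n + j) r \<psi>2 \<and> (\<forall>i<j. psat M \<pi> (n + i) r \<psi>1)"
    by (intro exI[of _ "m - n"]) auto
next
  assume "\<exists>j. psat M \<pi> (n + j) r \<psi>2 \<and> (\<forall>i<j. psat M \<pi> (n + i) r \<psi>1)"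
  then obtain j where j: "psat M \<pi> (n + j) r \<psi>2" "\<forall>i<j. psat M \<pi> (n + i) r \<psi>1"
    by blast
  have "psat M \<pi> k r \<psi>1" if "n \<le> k" "k < n + j" for k
    using j(2)[rule_format, of "k - n"] that by simp
  then show "psat M \<pi> n r (Until \<psi>1 \<psi>2)"
    using j(1) by (auto intro!: exI[of _ "n + j"])
qed

lemma psat_agrees_Until:
  fixes M :: "('s, 'o::finite) model"
  assumes wf: "wf_model M" and "psat_agrees M \<psi>1" "psat_agrees M \<psi>2"
  shows "psat_agrees M (Until \<psi>1 \<psi>2)"
  unfolding psat_agrees_def
proof (intro allI impI)
  fix \<pi> n and r :: "'o obs_record"
  assume "is_path M \<pi>" "stops_at r n"
  let ?I = "IS M (path_upto \<pi> n) r" and ?ob = "last (ol M r n)"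
  have shifted: "psat M \<pi> (n + j) r \<psi> \<longleftrightarrow>
      ipsat M (suffix_from (suffix_from \<pi> n) j) (UTn M j ?I (suffix_from \<pi> n) ?ob) ?ob \<psi>"
    if "psat_agrees M \<psi>" for \<psi> j
    using that \<open>is_path M \<pi>\<close> stops_at_mono[OF \<open>stops_at r n\<close>]
      last_ol_if_stops_at[OF \<open>stops_at r n\<close>, of "n + j" M]
    by (simp add: psat_agrees_def UTn_IS_path_upto[OF wf \<open>stops_at r n\<close>] suffix_from_suffix_from)
  then show "psat M \<pi> n r (Until \<psi>1 \<psi>2) \<longleftrightarrow> ipsat M (suffix_from \<pi> n) ?I ?ob (Until \<psi>1 \<psi>2)"
    unfolding psat_Until_offset ipsat.simps using shifted assms(2,3) by simp
qed

lemma semantics_agree: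
  fixes M :: "('s, 'o::finite) model"
  assumes wf: "wf_model M"
  shows "hsat_agrees M \<phi>" and "psat_agrees M \<psi>"
proof (induction \<phi> and \<psi>)
  case (Aq \<psi>)
  then show ?case by (rule hsat_agrees_Aq)
next
  case (Kn \<phi>)
  then show ?case by (rule hsat_agrees_Kn[OF wf])
next
  case (Delta ob \<phi>)
  then show ?case by (rule hsat_agrees_Delta[OF wf])
next
  case (Hist \<phi>)
  then show ?case by (rule psat_agrees_Hist)
next
  case (Nx \<psi>)
  then show ?case by (rule psat_agrees_Nx[OF wf])
next
  case (Until \<psi>1 \<psi>2)
  then show ?case by (rule psat_agrees_Until[OF wf])
qed (simp_all add: hsat_agrees_def psat_agrees_def)

theorem mainTheorem2:
  fixes M :: "('s, 'o::finite) model"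
    and \<phi> :: "'o hform" and h :: "'s list" and r :: "'o obs_record"
  assumes "wf_model M"
    and "is_history M h"
    and "stops_at_hist r h"
  shows "hsat M h r \<phi> \<longleftrightarrow> isat M (last h) (IS M h r) (obs_of M h r) \<phi>"
  using semantics_agree(1)[OF assms(1)] assms(2,3) unfolding hsat_agrees_def by blast

end
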